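(* Let $0\le r<n$. If all eigenvalues of the random-to-random shuffle element $\upsilon_r\in\mathbb{C}S_r$ (acting, e.g., by left multiplication on $\mathbb{C}S_r$) are integers, then all eigenvalues of the Laplacian $\Lambda_r$ on $M_r$ are integers.
   Context: $\upsilon_r=r\cdot\mathrm{id}+\sum_{u<v}(v,u,u+1,\dots,v-1)+\sum_{u>v}(v,u,u-1,\dots,v+1)\in\mathbb{C}S_r$ (cycle notation); acting on words by permuting positions it sends $w$ to $\sum_{u,v=1}^r w^{(u\to v)}$, where $w^{(u\to v)}$ removes the letter in position $u$ and reinserts it at position $v$. $M_r$ ($0\le r\le n$) is the complex vector space with orthonormal basis the injective words of length $r$ on $\{1,\dots,n\}$, with boundary $\partial_r(a_1\cdots a_r)=\sum_{j=1}^r(-1)^{j-1}a_1\cdots\widehat{a_j}\cdots a_r$; $\delta_r$ is the adjoint of $\partial_{r+1}$ and $\Lambda_r=\delta_{r-1}\partial_r+\partial_{r+1}\delta_r$. *)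

theory Defs
  imports Complex_Main
begin

text \<open>Injective words of length r on the alphabet {1..n}; they form the
  orthonormal basis of M_r. Vectors of M_r are represented as complex-valued
  functions on words vanishing outside this basis set (coefficient functions).\<close>

definition inj_words :: "nat \<Rightarrow> nat \<Rightarrow> nat list set" where
  "inj_words n r = {w. length w = r \<and> distinct w \<and> set w \<subseteq> {1..n}}"

definition del_pos :: "nat \<Rightarrow> 'a list \<Rightarrow> 'a list" where
  "del_pos j w = take j w @ drop (Suc j) w"

text \<open>Coefficient of the word u in the boundary of the word w:
  d(a_1...a_r) = sum_{j=1}^r (-1)^(j-1) a_1..^a_j..a_r  (here with 0-indexed j).\<close>
definition bd_coeff :: "nat list \<Rightarrow> nat list \<Rightarrow> complex" where
  "bd_coeff w u = (\<Sum>j<length w. if del_pos j w = u then (-1) ^ j else 0)"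

definition bd :: "nat \<Rightarrow> nat \<Rightarrow> (nat list \<Rightarrow> complex) \<Rightarrow> (nat list \<Rightarrow> complex)" where
  "bd n r f = (\<lambda>u. if r \<ge> 1 \<and> u \<in> inj_words n (r - 1)
                 then (\<Sum>w\<in>inj_words n r. bd_coeff w u * f w) else 0)"

text \<open>\<delta>_r : M_r \<rightarrow> M_(r+1), the adjoint of \<partial>_(r+1) w.r.t. the orthonormal word basis.\<close>
definition cobd :: "nat \<Rightarrow> nat \<Rightarrow> (nat list \<Rightarrow> complex) \<Rightarrow> (nat list \<Rightarrow> complex)" where
  "cobd n r g = (\<lambda>w. if w \<in> inj_words n (Suc r)
                 then (\<Sum>u\<in>inj_words n r. cnj (bd_coeff w u) * g u) else 0)"

text \<open>Laplacian \<Lambda>_r = \<delta>_(r-1) \<partial>_r + \<partial>_(r+1) \<delta>_r on M_r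
  (for r = 0 the first summand is absent, since \<partial>_0 = 0).\<close>
definition laplacian :: "nat \<Rightarrow> nat \<Rightarrow> (nat list \<Rightarrow> complex) \<Rightarrow> (nat list \<Rightarrow> complex)" where
  "laplacian n r f = (\<lambda>w.
     (if r = 0 then 0 else cobd n (r - 1) (bd n r f) w) + bd n (Suc r) (cobd n r f) w)"

definition move_letter :: "nat \<Rightarrow> nat \<Rightarrow> 'a list \<Rightarrow> 'a list" where
  "move_letter u v w = (let w' = del_pos u w in take v w' @ (w ! u) # drop v w')"

text \<open>The random-to-random element \<upsilon>_r acting on \<complex>S_r, where S_r is identified with
  the injective words of length r on {1..r} (one-line notation) and \<upsilon>_r acts by
  permuting positions: w \<mapsto> \<Sum>_(u,v) w^(u\<rightarrow>v).\<close>
definition upsilon_op :: "nat \<Rightarrow> (nat list \<Rightarrow> complex) \<Rightarrow> (nat list \<Rightarrow> complex)" where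
  "upsilon_op r f = (\<lambda>x. if x \<in> inj_words r r then
      (\<Sum>w\<in>inj_words r r. (\<Sum>u<r. \<Sum>v<r. if move_letter u v w = x then f w else 0))
     else 0)"

definition is_eigenvalue :: "'a set \<Rightarrow> (('a \<Rightarrow> complex) \<Rightarrow> ('a \<Rightarrow> complex)) \<Rightarrow> complex \<Rightarrow> bool" where
  "is_eigenvalue B T c \<longleftrightarrow>
     (\<exists>f. (\<forall>x. x \<notin> B \<longrightarrow> f x = 0) \<and> f \<noteq> (\<lambda>_. 0) \<and> T f = (\<lambda>x. c * f x))"

end

(*
  On M_r the Laplacian decomposes as  Lambda_r = P - L + c(n,r), where
  P = U + T/2 acts on positions only (U is the signed random-to-random operator,
  T the sum of all transpositions of positions), L is the sum of all transpositions of
  letters in S_n, and c(n,r) + r/2 is an integer.  P and L commute, and the eigenvalues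
  of L are integers because those of every Jucys-Murphy element X_k are (Okounkov-Vershik).
  A common eigenvector of Lambda_r and L therefore turns an eigenvalue c of Lambda_r into
  an eigenvalue c + t - c(n,r) of P with t integral.  As P does not see the names of the
  letters, relabelling a word in the support of the eigenvector yields the same eigenvalue
  of P on S_r, where T = 2 L_r + r; a common eigenvector of P and L_r gives an eigenvalue
  of U differing from it by an integer plus r/2.  Finally, twisting by the sign character
  conjugates U into upsilon_r, whose eigenvalues are integral by hypothesis.
*)

theory Submission
  imports Defs "HOL-Computational_Algebra.Fundamental_Theorem_Algebra" "HOL-Combinatorics.Transposition"
begin

section \<open>Common eigenvectors of commuting operators\<close>

definition supported :: "'a set \<Rightarrow> ('a \<Rightarrow> complex) \<Rightarrow> bool" where
  "supported B f \<longleftrightarrow> (\<forall>x. x \<notin> B \<longrightarrow> f x = 0)"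

lemma is_eigenvalue_iff:
  "is_eigenvalue B T c \<longleftrightarrow> (\<exists>f. supported B f \<and> f \<noteq> (\<lambda>_. 0) \<and> T f = (\<lambda>x. c * f x))"
  unfolding is_eigenvalue_def supported_def ..

definition lin_op :: "(('a \<Rightarrow> complex) \<Rightarrow> ('b \<Rightarrow> complex)) \<Rightarrow> bool" where
  "lin_op Y \<longleftrightarrow> (\<forall>f g. Y (\<lambda>x. f x + g x) = (\<lambda>x. Y f x + Y g x)) \<and>
                 (\<forall>c f. Y (\<lambda>x. c * f x) = (\<lambda>x. c * Y f x))"

lemma lin_op_add: "lin_op Y \<Longrightarrow> Y (\<lambda>x. f x + g x) = (\<lambda>x. Y f x + Y g x)"
  unfolding lin_op_def by blast

lemma lin_op_scale: "lin_op Y \<Longrightarrow> Y (\<lambda>x. c * f x) = (\<lambda>x. c * Y f x)"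
  unfolding lin_op_def by blast

lemma lin_op_zero: "lin_op Y \<Longrightarrow> Y (\<lambda>x. 0) = (\<lambda>x. 0)"
  using lin_op_scale[of Y 0 "\<lambda>x. 0"] by simp

lemma lin_op_diff: "lin_op Y \<Longrightarrow> Y (\<lambda>x. f x - g x) = (\<lambda>x. Y f x - Y g x)"
  using lin_op_add[of Y f "\<lambda>x. (-1) * g x"] lin_op_scale[of Y "-1" g] by simp

lemma lin_op_sum:
  assumes "lin_op Y" "finite J"
  shows "Y (\<lambda>x. \<Sum>j\<in>J. c j * g j x) = (\<lambda>x. \<Sum>j\<in>J. c j * Y (g j) x)"
  using assms(2)
proof induction
  case (insert a F)
  have "Y (\<lambda>x. \<Sum>j\<in>insert a F. c j * g j x) = Y (\<lambda>x. c a * g a x + (\<Sum>j\<in>F. c j * g j x))"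
    using insert by simp
  also have "\<dots> = (\<lambda>x. c a * Y (g a) x + Y (\<lambda>x. \<Sum>j\<in>F. c j * g j x) x)"
    using lin_op_add[OF assms(1)] lin_op_scale[OF assms(1)] by simp
  finally show ?case using insert by simp
qed (simp add: lin_op_zero[OF assms(1)])

lemma supported_eliminate_point:
  assumes "supported (insert b B) f" "supported (insert b B) g" "g b \<noteq> 0"
  shows "supported B (\<lambda>x. f x - f b / g b * g x)"
  unfolding supported_def
proof (intro allI impI)
  fix x assume "x \<notin> B"
  show "f x - f b / g b * g x = 0"
  proof (cases "x = b")
    case False
    then show ?thesis using assms(1,2) \<open>x \<notin> B\<close> unfolding supported_def by simp
  qed (simp add: assms(3))
qed

lemma pivot_combination_vanishes:
  fixes fs :: "'j \<Rightarrow> 'a \<Rightarrow> complex"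
  assumes "finite J" "k \<in> J" "(\<Sum>j\<in>J - {k}. d j * (fs j x - fs j b / fs k b * fs k x)) = 0"
  shows "(\<Sum>j\<in>J. (if j = k then - (\<Sum>i\<in>J - {k}. d i * fs i b) / fs k b else d j) * fs j x) = 0"
proof -
  let ?c = "\<lambda>j. if j = k then - (\<Sum>i\<in>J - {k}. d i * fs i b) / fs k b else d j"
  have "(\<Sum>j\<in>J. ?c j * fs j x) = ?c k * fs k x + (\<Sum>j\<in>J - {k}. ?c j * fs j x)"
    by (rule sum.remove[OF assms(1,2)])
  also have "(\<Sum>j\<in>J - {k}. ?c j * fs j x) = (\<Sum>j\<in>J - {k}. d j * fs j x)"
    by (rule sum.cong) auto
  also have "\<dots> = (\<Sum>j\<in>J - {k}. d j * (fs j x - fs j b / fs k b * fs k x) + d j * fs j b / fs k b * fs k x)"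
    by (rule sum.cong) (auto simp: algebra_simps)
  also have "\<dots> = (\<Sum>j\<in>J - {k}. d j * (fs j x - fs j b / fs k b * fs k x))
      + (\<Sum>j\<in>J - {k}. d j * fs j b) / fs k b * fs k x"
    by (simp add: sum.distrib sum_distrib_right sum_divide_distrib)
  finally show ?thesis using assms(3) by simp
qed

lemma supported_family_dependent:
  assumes "finite B" "finite J" "card B < card J" "\<forall>j\<in>J. supported B (fs j)"
  shows "\<exists>c. (\<exists>j\<in>J. c j \<noteq> 0) \<and> (\<forall>x. (\<Sum>j\<in>J. c j * fs j x) = 0)"
  using assms
proof (induction B arbitrary: J fs rule: finite_induct)
  case empty
  then obtain j where "j \<in> J" by fastforce
  have "\<forall>x. (\<Sum>j\<in>J. 1 * fs j x) = 0" using empty by (simp add: supported_def)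
  then show ?case using \<open>j \<in> J\<close> by (intro exI[of _ "\<lambda>_. 1"]) auto
next
  case (insert b B)
  show ?case
  proof (cases "\<forall>j\<in>J. fs j b = 0")
    case True
    then have "\<forall>j\<in>J. supported B (fs j)"
      using insert.prems(3) unfolding supported_def by (metis insert_iff)
    moreover have "card B < card J" using insert.hyps insert.prems(2) by simp
    ultimately show ?thesis using insert.IH insert.prems by blast
  next
    case False
    then obtain k where k: "k \<in> J" "fs k b \<noteq> 0" by blast
    have "\<forall>j\<in>J - {k}. supported B (\<lambda>x. fs j x - fs j b / fs k b * fs k x)"
      using supported_eliminate_point[OF insert.prems(3)[rule_format] insert.prems(3)[rule_format, OF k(1)] k(2)]
      by simp
    moreover have "card B < card (J - {k})" "finite (J - {k})"
      using insert.hyps insert.prems(1,2) k by auto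
    ultimately have "\<exists>d. (\<exists>j\<in>J - {k}. d j \<noteq> 0) \<and>
        (\<forall>x. (\<Sum>j\<in>J - {k}. d j * (fs j x - fs j b / fs k b * fs k x)) = 0)"
      using insert.IH[of "J - {k}" "\<lambda>j x. fs j x - fs j b / fs k b * fs k x"] by simp
    then obtain d where d: "\<exists>j\<in>J - {k}. d j \<noteq> 0"
        "\<forall>x. (\<Sum>j\<in>J - {k}. d j * (fs j x - fs j b / fs k b * fs k x)) = 0"
      by blast
    define c where "c j = (if j = k then - (\<Sum>i\<in>J - {k}. d i * fs i b) / fs k b else d j)" for j
    have "\<exists>j\<in>J. c j \<noteq> 0" using d(1) unfolding c_def by auto
    moreover have "\<forall>x. (\<Sum>j\<in>J. c j * fs j x) = 0"
      unfolding c_def using pivot_combination_vanishes[where d = d and fs = fs and b = b,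
          OF insert.prems(1) k(1) d(2)[rule_format]] by blast
    ultimately show ?thesis by blast
  qed
qed

definition poly_op :: "(('a \<Rightarrow> complex) \<Rightarrow> ('a \<Rightarrow> complex)) \<Rightarrow> complex poly \<Rightarrow>
    ('a \<Rightarrow> complex) \<Rightarrow> 'a \<Rightarrow> complex" where
  "poly_op Y p f = (\<lambda>x. \<Sum>j\<le>degree p. coeff p j * (Y ^^ j) f x)"

lemma poly_op_degree_le:
  assumes "degree p \<le> N"
  shows "poly_op Y p f = (\<lambda>x. \<Sum>j\<le>N. coeff p j * (Y ^^ j) f x)"
  unfolding poly_op_def using assms
  by (intro ext sum.mono_neutral_left) (auto simp: coeff_eq_0)

lemma poly_op_linear_factor:
  assumes "lin_op Y"
  shows "poly_op Y ([:-z, 1:] * q) f = (\<lambda>x. Y (poly_op Y q f) x - z * poly_op Y q f x)"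
proof -
  define N where "N = degree q"
  have deg: "degree ([:-z, 1:] * q) \<le> Suc N"
    unfolding N_def using degree_mult_le[of "[:-z, 1:]" q] by simp
  have "poly_op Y ([:-z, 1:] * q) f
      = (\<lambda>x. (\<Sum>j\<le>Suc N. coeff (pCons 0 q) j * (Y ^^ j) f x)
             - z * (\<Sum>j\<le>Suc N. coeff q j * (Y ^^ j) f x))"
    unfolding poly_op_degree_le[OF deg]
    by (simp add: algebra_simps sum.distrib sum_distrib_left sum_subtractf)
  also have "(\<lambda>x. \<Sum>j\<le>Suc N. coeff (pCons 0 q) j * (Y ^^ j) f x)
      = (\<lambda>x. \<Sum>j\<le>N. coeff q j * Y ((Y ^^ j) f) x)"
    by (simp add: sum.atMost_Suc_shift del: sum.atMost_Suc)
  also have "\<dots> = Y (poly_op Y q f)"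
    unfolding poly_op_def N_def by (rule lin_op_sum[OF assms, symmetric]) simp
  also have "(\<lambda>x. \<Sum>j\<le>Suc N. coeff q j * (Y ^^ j) f x) = poly_op Y q f"
    by (rule poly_op_degree_le[symmetric]) (simp add: N_def)
  finally show ?thesis .
qed

lemma annihilating_poly_eigenvector:
  assumes Y: "lin_op Y" and "p \<noteq> 0" "f \<noteq> (\<lambda>_. 0)" "poly_op Y p f = (\<lambda>_. 0)"
  shows "\<exists>q a. poly_op Y q f \<noteq> (\<lambda>_. 0) \<and> Y (poly_op Y q f) = (\<lambda>x. a * poly_op Y q f x)"
  using assms(2-4)
proof (induction "degree p" arbitrary: p rule: less_induct)
  case less
  show ?case
  proof (cases "degree p = 0")
    case True
    then obtain c where "p = [:c:]" "c \<noteq> 0" using less.prems(1) by (metis degree_eq_zeroE pCons_0_0)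
    then have "poly_op Y p f = (\<lambda>x. c * f x)" by (simp add: poly_op_def)
    with less.prems \<open>c \<noteq> 0\<close> show ?thesis by (simp add: fun_eq_iff)
  next
    case False
    then obtain z where "poly p z = 0"
      using fundamental_theorem_of_algebra[of p] constant_degree[of p] by auto
    then obtain q where p: "p = [:-z, 1:] * q"
      using dvd_iff_poly_eq_0[of "-z" p] by (auto elim: dvdE)
    with less.prems(1) have "q \<noteq> 0" by auto
    then have "degree q < degree p"
      unfolding p using degree_mult_eq[of "[:-z, 1:]" q] by simp
    have Yq: "Y (poly_op Y q f) x = z * poly_op Y q f x" for x
      using less.prems(3) fun_cong[OF poly_op_linear_factor[OF Y, of z q f], of x] by (simp add: p)
    show ?thesis
    proof (cases "poly_op Y q f = (\<lambda>_. 0)")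
      case True
      then show ?thesis using less.hyps[OF \<open>degree q < degree p\<close> \<open>q \<noteq> 0\<close> less.prems(2)] by blast
    next
      case False
      then show ?thesis using Yq by blast
    qed
  qed
qed

lemma invariant_subspace_eigenvector:
  assumes B: "finite B" and Y: "lin_op Y"
    and supp: "\<And>f. E f \<Longrightarrow> supported B f"
    and E_add: "\<And>f g. E f \<Longrightarrow> E g \<Longrightarrow> E (\<lambda>x. f x + g x)"
    and E_scale: "\<And>c f. E f \<Longrightarrow> E (\<lambda>x. c * f x)"
    and E_Y: "\<And>f. E f \<Longrightarrow> E (Y f)"
    and v: "E v" "v \<noteq> (\<lambda>_. 0)"
  shows "\<exists>w a. E w \<and> w \<noteq> (\<lambda>_. 0) \<and> Y w = (\<lambda>x. a * w x)"
proof -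
  have E_pow: "E ((Y ^^ j) v)" for j
    by (induction j) (simp_all add: v(1) E_Y)
  have E_sum: "E (\<lambda>x. \<Sum>j\<in>J. c j * (Y ^^ j) v x)" if "finite J" for J c
    using that
  proof induction
    case empty
    show ?case using E_scale[OF v(1), of 0] by simp
  next
    case (insert a F)
    then show ?case using E_add[OF E_scale[OF E_pow]] by simp
  qed
  obtain c where c: "\<exists>j\<le>card B. c j \<noteq> 0" "\<forall>x. (\<Sum>j\<le>card B. c j * (Y ^^ j) v x) = 0"
    using supported_family_dependent[OF B, of "{..card B}" "\<lambda>j. (Y ^^ j) v"] supp E_pow by auto
  define p where "p = (\<Sum>j\<le>card B. monom (c j) j)"
  have coeff_p: "coeff p j = (if j \<le> card B then c j else 0)" for j
    unfolding p_def coeff_sum by (simp add: coeff_monom)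
  have "p \<noteq> 0" using c(1) coeff_p by (metis coeff_0)
  moreover have "degree p \<le> card B"
    using coeff_p by (intro degree_le) auto
  then have "poly_op Y p v = (\<lambda>_. 0)"
    using poly_op_degree_le[of p "card B" Y v] c(2) coeff_p by simp
  ultimately obtain q a where "poly_op Y q v \<noteq> (\<lambda>_. 0)" "Y (poly_op Y q v) = (\<lambda>x. a * poly_op Y q v x)"
    using annihilating_poly_eigenvector[OF Y _ v(2)] by blast
  moreover have "E (poly_op Y q v)"
    unfolding poly_op_def by (rule E_sum) simp
  ultimately show ?thesis by blast
qed

lemma commuting_ops_common_eigenvector:
  assumes B: "finite B" and Y: "lin_op Y" and Z: "lin_op Z"
    and Y_supp: "\<And>f. supported B f \<Longrightarrow> supported B (Y f)"
    and YZ: "\<And>f. supported B f \<Longrightarrow> Y (Z f) = Z (Y f)"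
    and v: "supported B v" "v \<noteq> (\<lambda>_. 0)" "Z v = (\<lambda>x. b * v x)"
  shows "\<exists>w a. supported B w \<and> w \<noteq> (\<lambda>_. 0) \<and> Z w = (\<lambda>x. b * w x) \<and> Y w = (\<lambda>x. a * w x)"
proof -
  define E where "E f \<longleftrightarrow> supported B f \<and> Z f = (\<lambda>x. b * f x)" for f
  have "E (\<lambda>x. f x + g x)" if "E f" "E g" for f g
    using that lin_op_add[OF Z, of f g] unfolding E_def supported_def by (auto simp: algebra_simps)
  moreover have "E (\<lambda>x. c * f x)" if "E f" for c f
    using that lin_op_scale[OF Z, of c f] unfolding E_def supported_def by (auto simp: algebra_simps)
  moreover have "E (Y f)" if "E f" for f
    using that YZ[of f] Y_supp[of f] lin_op_scale[OF Y, of b f] unfolding E_def by simp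
  ultimately show ?thesis
    using invariant_subspace_eigenvector[OF B Y, of E v] v unfolding E_def by blast
qed

section \<open>Words\<close>

definition ins_pos :: "nat \<Rightarrow> 'a \<Rightarrow> 'a list \<Rightarrow> 'a list" where
  "ins_pos k a w = take k w @ a # drop k w"

definition swap_pos :: "nat \<Rightarrow> nat \<Rightarrow> 'a list \<Rightarrow> 'a list" where
  "swap_pos i j w = w[i := w ! j, j := w ! i]"

lemma length_del_pos [simp]: "j < length w \<Longrightarrow> length (del_pos j w) = length w - 1"
  unfolding del_pos_def by simp

lemma length_ins_pos [simp]: "k \<le> length w \<Longrightarrow> length (ins_pos k a w) = Suc (length w)"
  unfolding ins_pos_def by simp

lemma set_ins_pos [simp]: "set (ins_pos k a w) = insert a (set w)"
  unfolding ins_pos_def by (metis Un_insert_right append_take_drop_id list.simps(15) set_append)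

lemma distinct_ins_pos [simp]: "distinct (ins_pos k a w) \<longleftrightarrow> a \<notin> set w \<and> distinct w"
proof -
  have "distinct (xs @ a # ys) \<longleftrightarrow> distinct (a # xs @ ys)" for xs ys :: "'a list"
    by auto
  then have "distinct (ins_pos k a w) \<longleftrightarrow> distinct (a # take k w @ drop k w)"
    unfolding ins_pos_def by blast
  then show ?thesis by simp
qed

lemma nth_ins_pos_same [simp]: "k \<le> length w \<Longrightarrow> ins_pos k a w ! k = a"
  unfolding ins_pos_def by (simp add: nth_append)

lemma distinct_del_pos: "distinct w \<Longrightarrow> distinct (del_pos j w)"
  unfolding del_pos_def using set_take_disj_set_drop_if_distinct[of w j "Suc j"]
  by (simp add: distinct_append)

lemma set_del_pos_subset: "set (del_pos j w) \<subseteq> set w"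
  unfolding del_pos_def by (auto dest: in_set_takeD in_set_dropD)

lemma set_del_pos:
  assumes "distinct w" "j < length w"
  shows "set (del_pos j w) = set w - {w ! j}"
proof -
  have w: "w = take j w @ w ! j # drop (Suc j) w" using assms(2) by (rule id_take_nth_drop)
  have "distinct (take j w @ w ! j # drop (Suc j) w)" using assms(1) w by simp
  then show ?thesis unfolding del_pos_def by (subst (2) w) auto
qed

lemma del_pos_ins_pos_same [simp]: "k \<le> length w \<Longrightarrow> del_pos k (ins_pos k a w) = w"
  unfolding del_pos_def ins_pos_def by simp

lemma ins_pos_nth_del_pos: "i < length w \<Longrightarrow> ins_pos i (w ! i) (del_pos i w) = w"
  unfolding del_pos_def ins_pos_def by (simp add: id_take_nth_drop[symmetric])

lemma ins_pos_del_pos: "i < length w \<Longrightarrow> ins_pos i a (del_pos i w) = w[i := a]"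
  unfolding del_pos_def ins_pos_def by (simp add: upd_conv_take_nth_drop)

lemma del_pos_ins_pos_Suc:
  "j \<le> i \<Longrightarrow> i < length w \<Longrightarrow> del_pos j (ins_pos (Suc i) a w) = ins_pos i a (del_pos j w)"
  unfolding del_pos_def ins_pos_def by (simp add: drop_take)

lemma del_pos_Suc_ins_pos:
  "j \<le> i \<Longrightarrow> i < length w \<Longrightarrow> del_pos (Suc i) (ins_pos j a w) = ins_pos j a (del_pos i w)"
  unfolding del_pos_def ins_pos_def by (simp add: take_drop Suc_diff_le)

lemma move_letter_eq: "move_letter u v w = ins_pos v (w ! u) (del_pos u w)"
  unfolding move_letter_def ins_pos_def Let_def by simp

lemma length_move_letter [simp]:
  "u < length w \<Longrightarrow> v < length w \<Longrightarrow> length (move_letter u v w) = length w"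
  unfolding move_letter_eq by simp

lemma set_move_letter [simp]: "u < length w \<Longrightarrow> set (move_letter u v w) = set w"
  unfolding move_letter_eq by (metis ins_pos_nth_del_pos set_ins_pos)

lemma distinct_move_letter [simp]: "u < length w \<Longrightarrow> distinct (move_letter u v w) = distinct w"
  unfolding move_letter_eq by (metis distinct_ins_pos ins_pos_nth_del_pos)

lemma move_letter_inverse:
  assumes "u < length w" "v < length w"
  shows "move_letter v u (move_letter u v w) = w"
proof -
  have "v \<le> length (del_pos u w)" using assms by simp
  then show ?thesis using ins_pos_nth_del_pos[OF assms(1)] unfolding move_letter_eq by simp
qed

lemma map_del_pos: "map f (del_pos j w) = del_pos j (map f w)"
  unfolding del_pos_def by (simp add: take_map drop_map)

lemma map_ins_pos: "map f (ins_pos k a w) = ins_pos k (f a) (map f w)"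
  unfolding ins_pos_def by (simp add: take_map drop_map)

lemma map_move_letter: "u < length w \<Longrightarrow> map f (move_letter u v w) = move_letter u v (map f w)"
  unfolding move_letter_eq by (simp add: map_ins_pos map_del_pos)

lemma map_swap_pos: "i < length w \<Longrightarrow> j < length w \<Longrightarrow> map f (swap_pos i j w) = swap_pos i j (map f w)"
  unfolding swap_pos_def by (simp add: map_update)

lemma map_transpose_nth_nth:
  "distinct w \<Longrightarrow> i < length w \<Longrightarrow> j < length w \<Longrightarrow> map (transpose (w ! i) (w ! j)) w = swap_pos i j w"
  by (rule nth_equalityI) (auto simp: swap_pos_def transpose_def nth_list_update nth_eq_iff_index_eq)

lemma map_transpose_nth_notin:
  "distinct w \<Longrightarrow> j < length w \<Longrightarrow> b \<notin> set w \<Longrightarrow> map (transpose (w ! j) b) w = w[j := b]"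
  by (rule nth_equalityI) (auto simp: transpose_def nth_list_update nth_eq_iff_index_eq)

lemma map_transpose_notin: "a \<notin> set w \<Longrightarrow> b \<notin> set w \<Longrightarrow> map (transpose a b) w = w"
  by (induction w) auto

fun word_sign :: "nat list \<Rightarrow> complex" where
  "word_sign [] = 1"
| "word_sign (a # w) = (-1) ^ length (filter (\<lambda>b. b < a) w) * word_sign w"

lemma word_sign_nonzero: "word_sign w \<noteq> 0"
  by (induction w) auto

lemma length_filter_ins_pos:
  "length (filter P (ins_pos k a w)) = length (filter P w) + (if P a then 1 else 0)"
  unfolding ins_pos_def by (subst (3) append_take_drop_id[of k w, symmetric]) (simp del: append_take_drop_id)

lemma word_sign_ins_pos:
  "a \<notin> set w \<Longrightarrow> k \<le> length w \<Longrightarrow>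
    word_sign (ins_pos k a w) = (-1) ^ (k + length (filter (\<lambda>b. b < a) w)) * word_sign w"
proof (induction w arbitrary: k)
  case Nil
  then show ?case by (simp add: ins_pos_def)
next
  case (Cons b w)
  show ?case
  proof (cases k)
    case 0
    then show ?thesis by (simp add: ins_pos_def)
  next
    case (Suc k')
    have "ins_pos k a (b # w) = b # ins_pos k' a w" unfolding Suc ins_pos_def by simp
    moreover have "a \<noteq> b" using Cons.prems by simp
    ultimately show ?thesis
      using Cons Suc length_filter_ins_pos[of "\<lambda>c. c < b" k' a w]
      by (cases "a < b") (auto simp: power_add)
  qed
qed

lemma word_sign_move_letter:
  assumes "distinct w" "u < length w" "v < length w"
  shows "word_sign (move_letter u v w) = (-1) ^ (u + v) * word_sign w"
proof -
  define e where "e = del_pos u w"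
  define K where "K = length (filter (\<lambda>b. b < w ! u) e)"
  have notin: "w ! u \<notin> set e" unfolding e_def using set_del_pos[OF assms(1,2)] by simp
  have "word_sign w = (-1) ^ (u + K) * word_sign e"
    using word_sign_ins_pos[OF notin, of u] ins_pos_nth_del_pos[OF assms(2)] assms(2)
    unfolding K_def e_def by simp
  moreover have "word_sign (move_letter u v w) = (-1) ^ (v + K) * word_sign e"
    unfolding K_def move_letter_eq e_def[symmetric]
    using word_sign_ins_pos[OF notin, of v] assms(2,3) unfolding e_def by simp
  moreover have "(-1::complex) ^ (u + v) * (-1) ^ (u + K) = (-1) ^ (2 * u) * (-1) ^ (v + K)"
    by (simp add: power_add mult_2 ac_simps)
  then have "(-1::complex) ^ (v + K) = (-1) ^ (u + v) * (-1) ^ (u + K)"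
    by (simp add: power_mult)
  ultimately show ?thesis by simp
qed

lemma length_inj_words: "w \<in> inj_words n r \<Longrightarrow> length w = r"
  unfolding inj_words_def by simp

lemma finite_inj_words: "finite (inj_words n r)"
proof (rule finite_subset)
  show "inj_words n r \<subseteq> {w. set w \<subseteq> {1..n} \<and> length w = r}" unfolding inj_words_def by auto
qed (rule finite_lists_length_eq, simp)

lemma map_transpose_in_inj_words:
  "a \<in> {1..n} \<Longrightarrow> b \<in> {1..n} \<Longrightarrow> w \<in> inj_words n r \<Longrightarrow> map (transpose a b) w \<in> inj_words n r"
  unfolding inj_words_def by (auto simp: distinct_map transpose_def)

lemma move_letter_in_inj_words:
  "w \<in> inj_words n r \<Longrightarrow> u < r \<Longrightarrow> v < r \<Longrightarrow> move_letter u v w \<in> inj_words n r"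
  unfolding inj_words_def by auto

lemma swap_pos_in_inj_words:
  assumes "w \<in> inj_words n r" "i < r" "j < r"
  shows "swap_pos i j w \<in> inj_words n r"
proof -
  have "w ! i \<in> {1..n}" "w ! j \<in> {1..n}" using assms nth_mem unfolding inj_words_def by blast+
  then have "map (transpose (w ! i) (w ! j)) w \<in> inj_words n r"
    using map_transpose_in_inj_words[OF _ _ assms(1)] by blast
  moreover have "map (transpose (w ! i) (w ! j)) w = swap_pos i j w"
    using map_transpose_nth_nth[of w i j] assms unfolding inj_words_def by auto
  ultimately show ?thesis by simp
qed

lemma del_pos_in_inj_words: "w \<in> inj_words n (Suc r) \<Longrightarrow> j \<le> r \<Longrightarrow> del_pos j w \<in> inj_words n r"
  unfolding inj_words_def using distinct_del_pos set_del_pos_subset by fastforce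

lemma ins_pos_in_inj_words:
  "w \<in> inj_words n r \<Longrightarrow> a \<in> {1..n} - set w \<Longrightarrow> i \<le> r \<Longrightarrow> ins_pos i a w \<in> inj_words n (Suc r)"
  unfolding inj_words_def by auto

section \<open>Operators on coefficient functions of words\<close>

definition pullback_op :: "'b set \<Rightarrow> 'i set \<Rightarrow> ('i \<Rightarrow> complex) \<Rightarrow> ('i \<Rightarrow> 'b \<Rightarrow> 'b) \<Rightarrow>
    ('b \<Rightarrow> complex) \<Rightarrow> 'b \<Rightarrow> complex" where
  "pullback_op W I c h f = (\<lambda>x. if x \<in> W then (\<Sum>i\<in>I. c i * f (h i x)) else 0)"

lemma lin_op_pullback_op: "lin_op (pullback_op W I c h)"
  unfolding lin_op_def pullback_op_def
  by (auto simp: fun_eq_iff sum.distrib sum_distrib_left algebra_simps)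

lemma supported_pullback_op: "supported W (pullback_op W I c h f)"
  unfolding supported_def pullback_op_def by simp

lemma pullback_op_commute:
  assumes "\<And>i x. i \<in> I \<Longrightarrow> x \<in> W \<Longrightarrow> h i x \<in> W"
    and "\<And>j x. j \<in> J \<Longrightarrow> x \<in> W \<Longrightarrow> g j x \<in> W"
    and "\<And>i j x. i \<in> I \<Longrightarrow> j \<in> J \<Longrightarrow> x \<in> W \<Longrightarrow> h i (g j x) = g j (h i x)"
  shows "pullback_op W I c h (pullback_op W J d g f) = pullback_op W J d g (pullback_op W I c h f)"
proof
  fix x
  show "pullback_op W I c h (pullback_op W J d g f) x = pullback_op W J d g (pullback_op W I c h f) x"
  proof (cases "x \<in> W")
    case True
    have "pullback_op W I c h (pullback_op W J d g f) x = (\<Sum>i\<in>I. \<Sum>j\<in>J. c i * d j * f (g j (h i x)))"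
      using True assms(1) unfolding pullback_op_def by (simp add: sum_distrib_left mult.assoc)
    also have "\<dots> = (\<Sum>j\<in>J. \<Sum>i\<in>I. d j * c i * f (h i (g j x)))"
      by (subst sum.swap) (simp add: assms(3) True mult.commute)
    also have "\<dots> = pullback_op W J d g (pullback_op W I c h f) x"
      using True assms(2) unfolding pullback_op_def by (simp add: sum_distrib_left mult.assoc)
    finally show ?thesis .
  qed (simp add: pullback_op_def)
qed

definition signed_shuffle_op :: "nat \<Rightarrow> nat \<Rightarrow> (nat list \<Rightarrow> complex) \<Rightarrow> nat list \<Rightarrow> complex" where
  "signed_shuffle_op n r = pullback_op (inj_words n r) ({..<r} \<times> {..<r})
     (\<lambda>(u, v). (-1) ^ (u + v)) (\<lambda>(u, v). move_letter u v)"

definition pos_transp_op :: "nat \<Rightarrow> nat \<Rightarrow> (nat list \<Rightarrow> complex) \<Rightarrow> nat list \<Rightarrow> complex" where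
  "pos_transp_op n r = pullback_op (inj_words n r) ({..<r} \<times> {..<r}) (\<lambda>_. 1) (\<lambda>(i, j). swap_pos i j)"

definition jucys_murphy_op :: "nat \<Rightarrow> nat \<Rightarrow> nat \<Rightarrow> (nat list \<Rightarrow> complex) \<Rightarrow> nat list \<Rightarrow> complex" where
  "jucys_murphy_op n r k = pullback_op (inj_words n r) {1..<k} (\<lambda>_. 1) (\<lambda>i. map (transpose i k))"

definition jucys_murphy_sum_op :: "nat \<Rightarrow> nat \<Rightarrow> nat \<Rightarrow> (nat list \<Rightarrow> complex) \<Rightarrow> nat list \<Rightarrow> complex" where
  "jucys_murphy_sum_op n r m = pullback_op (inj_words n r) (SIGMA k:{1..m}. {1..<k}) (\<lambda>_. 1)
     (\<lambda>(k, i). map (transpose i k))"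

definition letter_swap_op :: "nat \<Rightarrow> nat \<Rightarrow> nat \<Rightarrow> (nat list \<Rightarrow> complex) \<Rightarrow> nat list \<Rightarrow> complex" where
  "letter_swap_op n r i f = (\<lambda>x. if x \<in> inj_words n r then f (map (transpose i (Suc i)) x) else 0)"

lemma lin_op_word_ops:
  "lin_op (signed_shuffle_op n r)" "lin_op (pos_transp_op n r)" "lin_op (jucys_murphy_op n r k)"
  "lin_op (jucys_murphy_sum_op n r m)" "lin_op (letter_swap_op n r i)"
  unfolding signed_shuffle_op_def pos_transp_op_def jucys_murphy_op_def jucys_murphy_sum_op_def
  by (rule lin_op_pullback_op)+ (auto simp: lin_op_def letter_swap_op_def fun_eq_iff)

lemma supported_word_ops:
  "supported (inj_words n r) (signed_shuffle_op n r f)"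
  "supported (inj_words n r) (pos_transp_op n r f)"
  "supported (inj_words n r) (jucys_murphy_op n r k f)"
  "supported (inj_words n r) (jucys_murphy_sum_op n r m f)"
  "supported (inj_words n r) (letter_swap_op n r i f)"
  unfolding signed_shuffle_op_def pos_transp_op_def jucys_murphy_op_def jucys_murphy_sum_op_def
  by (rule supported_pullback_op)+ (simp add: supported_def letter_swap_op_def)

lemma jucys_murphy_op_apply:
  "jucys_murphy_op n r k f x =
    (if x \<in> inj_words n r then (\<Sum>i\<in>{1..<k}. f (map (transpose i k) x)) else 0)"
  unfolding jucys_murphy_op_def pullback_op_def by simp

lemma jucys_murphy_sum_op_apply:
  "jucys_murphy_sum_op n r m f x = (\<Sum>k\<in>{1..m}. jucys_murphy_op n r k f x)"
proof -
  have "(\<Sum>(k, i)\<in>(SIGMA k:{1..m}. {1..<k}). f (map (transpose i k) x)) =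
        (\<Sum>k\<in>{1..m}. \<Sum>i\<in>{1..<k}. f (map (transpose i k) x))"
    by (rule sum.Sigma[symmetric]) auto
  then show ?thesis
    unfolding jucys_murphy_sum_op_def jucys_murphy_op_apply pullback_op_def by (simp add: split_beta)
qed

lemma letter_swap_op_involutive:
  assumes "supported (inj_words n r) f" "1 \<le> i" "Suc i \<le> n"
  shows "letter_swap_op n r i (letter_swap_op n r i f) = f"
proof
  fix x
  show "letter_swap_op n r i (letter_swap_op n r i f) x = f x"
  proof (cases "x \<in> inj_words n r")
    case True
    then have "map (transpose i (Suc i)) x \<in> inj_words n r"
      using map_transpose_in_inj_words assms(2,3) by simp
    then show ?thesis using True by (simp add: letter_swap_op_def)
  qed (use assms(1) in \<open>simp add: letter_swap_op_def supported_def\<close>)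
qed

lemma jucys_murphy_op_Suc_letter_swap:
  assumes "supported (inj_words n r) f" "1 \<le> i" "Suc i \<le> n"
  shows "jucys_murphy_op n r (Suc i) (letter_swap_op n r i f) =
    (\<lambda>x. letter_swap_op n r i (jucys_murphy_op n r i f) x + f x)"
proof
  fix x
  let ?s = "transpose i (Suc i)"
  show "jucys_murphy_op n r (Suc i) (letter_swap_op n r i f) x =
    letter_swap_op n r i (jucys_murphy_op n r i f) x + f x"
  proof (cases "x \<in> inj_words n r")
    case True
    have in_W: "map (transpose j (Suc i)) x \<in> inj_words n r" "map ?s x \<in> inj_words n r"
      if "j \<in> {1..<Suc i}" for j
      using map_transpose_in_inj_words True assms(2,3) that by auto
    have conj: "?s \<circ> transpose j (Suc i) = transpose j i \<circ> ?s" if "j < i" for j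
      using that by (auto simp: fun_eq_iff transpose_def)
    have "{1..<Suc i} = insert i {1..<i}" using assms(2) by auto
    then have "jucys_murphy_op n r (Suc i) (letter_swap_op n r i f) x =
        f x + (\<Sum>j\<in>{1..<i}. f (map (transpose j i) (map ?s x)))"
      using True in_W conj by (simp add: jucys_murphy_op_apply letter_swap_op_def)
    also have "(\<Sum>j\<in>{1..<i}. f (map (transpose j i) (map ?s x))) =
        letter_swap_op n r i (jucys_murphy_op n r i f) x"
      using True in_W(2)[of i] assms(2) by (simp add: jucys_murphy_op_apply letter_swap_op_def)
    finally show ?thesis by simp
  qed (use assms(1) in \<open>simp add: letter_swap_op_def jucys_murphy_op_apply supported_def\<close>)
qed

lemma jucys_murphy_op_letter_swap:
  assumes "supported (inj_words n r) f" "1 \<le> i" "Suc i \<le> n"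
  shows "jucys_murphy_op n r i (letter_swap_op n r i f) =
    (\<lambda>x. letter_swap_op n r i (jucys_murphy_op n r (Suc i) f) x - f x)"
proof -
  let ?S = "letter_swap_op n r i" and ?X = "jucys_murphy_op n r i" and ?X' = "jucys_murphy_op n r (Suc i)"
  have "?X' f = ?X' (?S (?S f))" using letter_swap_op_involutive[OF assms] by simp
  also have "\<dots> = (\<lambda>x. ?S (?X (?S f)) x + ?S f x)"
    by (rule jucys_murphy_op_Suc_letter_swap[OF supported_word_ops(5) assms(2,3)])
  finally have "?S (?X' f) = (\<lambda>x. ?S (?S (?X (?S f))) x + ?S (?S f) x)"
    using lin_op_add[OF lin_op_word_ops(5)] by metis
  also have "?S (?S (?X (?S f))) = ?X (?S f)"
    by (rule letter_swap_op_involutive[OF supported_word_ops(3) assms(2,3)])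
  finally show ?thesis using letter_swap_op_involutive[OF assms] by (simp add: fun_eq_iff)
qed

lemma jucys_murphy_ops_commute_lt:
  assumes "j < k" "k \<le> n"
  shows "jucys_murphy_op n r j (jucys_murphy_op n r k f) = jucys_murphy_op n r k (jucys_murphy_op n r j f)"
proof
  fix x
  show "jucys_murphy_op n r j (jucys_murphy_op n r k f) x = jucys_murphy_op n r k (jucys_murphy_op n r j f) x"
  proof (cases "x \<in> inj_words n r")
    case True
    have in_W: "map (transpose a j) x \<in> inj_words n r" "map (transpose a k) x \<in> inj_words n r"
      if "a \<in> {1..<j}" for a
      using map_transpose_in_inj_words True assms that by auto
    have in_W': "map (transpose b k) x \<in> inj_words n r" if "b \<in> {1..<k}" for b
      using map_transpose_in_inj_words True assms that by auto
    have conj: "transpose a j \<circ> transpose (transpose a j b) k = transpose b k \<circ> transpose a j"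
      if "a < j" for a b
      using that assms(1) by (auto simp: fun_eq_iff transpose_def)
    have "jucys_murphy_op n r j (jucys_murphy_op n r k f) x =
        (\<Sum>a\<in>{1..<j}. \<Sum>b\<in>{1..<k}. f (map (transpose b k \<circ> transpose a j) x))"
      using True in_W by (simp add: jucys_murphy_op_apply)
    also have "\<dots> = (\<Sum>a\<in>{1..<j}. \<Sum>b\<in>{1..<k}. f (map (transpose a j \<circ> transpose b k) x))"
    proof (rule sum.cong[OF refl])
      fix a assume a: "a \<in> {1..<j}"
      show "(\<Sum>b\<in>{1..<k}. f (map (transpose b k \<circ> transpose a j) x)) =
            (\<Sum>b\<in>{1..<k}. f (map (transpose a j \<circ> transpose b k) x))"
      proof (rule sum.reindex_bij_witness[of _ "transpose a j" "transpose a j"])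
        show "f (map (transpose a j \<circ> transpose (transpose a j b) k) x) =
              f (map (transpose b k \<circ> transpose a j) x)" if "b \<in> {1..<k}" for b
          using conj a by simp
      qed (use a assms(1) in \<open>auto simp: transpose_def\<close>)
    qed
    also have "\<dots> = jucys_murphy_op n r k (jucys_murphy_op n r j f) x"
      using True in_W' by (subst sum.swap) (simp add: jucys_murphy_op_apply)
    finally show ?thesis .
  qed (simp add: jucys_murphy_op_apply)
qed

lemma jucys_murphy_ops_commute:
  "j \<le> n \<Longrightarrow> k \<le> n \<Longrightarrow>
    jucys_murphy_op n r j (jucys_murphy_op n r k f) = jucys_murphy_op n r k (jucys_murphy_op n r j f)"
  using jucys_murphy_ops_commute_lt[of j k n r f] jucys_murphy_ops_commute_lt[of k j n r f]
  by (cases j k rule: linorder_cases) auto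

section \<open>Integrality of Jucys--Murphy eigenvalues\<close>

text \<open>With w = s_i v, the vector w + v / (a - b) is an eigenvector of X_i for b unless it
  vanishes; then s_i acts on v by a scalar squaring to 1, which forces b = a \<plusminus> 1.\<close>

lemma jucys_murphy_eigenvalue_step:
  assumes i: "1 \<le> i" "Suc i \<le> n"
    and v: "supported (inj_words n r) v" "v \<noteq> (\<lambda>_. 0)"
      "jucys_murphy_op n r (Suc i) v = (\<lambda>x. b * v x)" "jucys_murphy_op n r i v = (\<lambda>x. a * v x)"
    and "a \<noteq> b"
  shows "is_eigenvalue (inj_words n r) (jucys_murphy_op n r i) b \<or> b = a + 1 \<or> b = a - 1"
proof -
  let ?S = "letter_swap_op n r i" and ?X = "jucys_murphy_op n r i"
  define w where "w = ?S v"
  have Xw: "?X w = (\<lambda>x. b * w x - v x)"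
    unfolding w_def jucys_murphy_op_letter_swap[OF v(1) i] v(3) lin_op_scale[OF lin_op_word_ops(5)] ..
  have Sw: "?S w = v" unfolding w_def by (rule letter_swap_op_involutive[OF v(1) i])
  define u where "u = (\<lambda>x. w x + v x / (a - b))"
  have "?X u = (\<lambda>x. ?X w x + ?X (\<lambda>x. (1 / (a - b)) * v x) x)"
    unfolding u_def using lin_op_add[OF lin_op_word_ops(3), of n r i w] by simp
  then have Xu: "?X u = (\<lambda>x. b * u x)"
    unfolding Xw lin_op_scale[OF lin_op_word_ops(3)] v(4) u_def
    using \<open>a \<noteq> b\<close> by (simp add: fun_eq_iff field_simps)
  show ?thesis
  proof (cases "u = (\<lambda>_. 0)")
    case False
    have "supported (inj_words n r) u"
      using v(1) supported_word_ops(5) unfolding u_def w_def supported_def by simp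
    then show ?thesis using False Xu unfolding is_eigenvalue_iff by blast
  next
    case True
    define l where "l = 1 / (b - a)"
    have wl: "w = (\<lambda>x. l * v x)"
      using True \<open>a \<noteq> b\<close> unfolding u_def l_def by (auto simp: fun_eq_iff field_simps)
    have "v = (\<lambda>x. l * l * v x)"
      using Sw unfolding wl lin_op_scale[OF lin_op_word_ops(5)] w_def[symmetric] wl
      by (simp add: mult.assoc)
    moreover obtain x where "v x \<noteq> 0" using v(2) by auto
    ultimately have "l * l = 1" by (metis mult_cancel_right2)
    then have "(b - a - 1) * (b - a + 1) = 0"
      unfolding l_def using \<open>a \<noteq> b\<close> by (simp add: field_simps)
    then have "b - a - 1 = 0 \<or> b - a + 1 = 0" by (simp only: mult_eq_0_iff)
    then show ?thesis by (auto simp: algebra_simps)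
  qed
qed

lemma jucys_murphy_eigenvalue_int:
  assumes "1 \<le> k" "k \<le> n" "is_eigenvalue (inj_words n r) (jucys_murphy_op n r k) b"
  shows "b \<in> \<int>"
  using assms
proof (induction k arbitrary: b rule: nat_induct_at_least)
  case base
  then obtain v x where "jucys_murphy_op n r 1 v = (\<lambda>x. b * v x)" "v x \<noteq> 0"
    unfolding is_eigenvalue_iff by fastforce
  moreover have "jucys_murphy_op n r 1 v x = 0" by (simp add: jucys_murphy_op_apply)
  ultimately show ?case by (metis Ints_0 mult_eq_0_iff)
next
  case (Suc i)
  obtain v0 where v0: "supported (inj_words n r) v0" "v0 \<noteq> (\<lambda>_. 0)"
      "jucys_murphy_op n r (Suc i) v0 = (\<lambda>x. b * v0 x)"
    using Suc.prems unfolding is_eigenvalue_iff by blast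
  have "jucys_murphy_op n r i (jucys_murphy_op n r (Suc i) f) =
      jucys_murphy_op n r (Suc i) (jucys_murphy_op n r i f)" for f
    using jucys_murphy_ops_commute Suc.prems(1) by simp
  then obtain v a where v: "supported (inj_words n r) v" "v \<noteq> (\<lambda>_. 0)"
      "jucys_murphy_op n r (Suc i) v = (\<lambda>x. b * v x)" "jucys_murphy_op n r i v = (\<lambda>x. a * v x)"
    using commuting_ops_common_eigenvector[OF finite_inj_words lin_op_word_ops(3,3)
        supported_word_ops(3) _ v0] by blast
  then have "a \<in> \<int>"
    using Suc.IH Suc.prems(1) unfolding is_eigenvalue_iff by fastforce
  show ?case
  proof (cases "a = b")
    case False
    then show ?thesis
      using jucys_murphy_eigenvalue_step[OF Suc.hyps Suc.prems(1) v] Suc.IH Suc.prems(1) \<open>a \<in> \<int>\<close>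
      by auto
  qed (use \<open>a \<in> \<int>\<close> in simp)
qed

lemma jucys_murphy_sum_eigenvalue_int:
  assumes "m \<le> n" "is_eigenvalue (inj_words n r) (jucys_murphy_sum_op n r m) t"
  shows "t \<in> \<int>"
  using assms
proof (induction m arbitrary: t)
  case 0
  then obtain v x where "jucys_murphy_sum_op n r 0 v = (\<lambda>x. t * v x)" "v x \<noteq> 0"
    unfolding is_eigenvalue_iff by fastforce
  moreover have "jucys_murphy_sum_op n r 0 v x = 0" by (simp add: jucys_murphy_sum_op_apply)
  ultimately show ?case by (metis Ints_0 mult_eq_0_iff)
next
  case (Suc m)
  let ?X = "jucys_murphy_op n r (Suc m)" and ?L = "jucys_murphy_sum_op n r (Suc m)"
  obtain v0 where v0: "supported (inj_words n r) v0" "v0 \<noteq> (\<lambda>_. 0)" "?L v0 = (\<lambda>x. t * v0 x)"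
    using Suc.prems unfolding is_eigenvalue_iff by blast
  have L: "?L f = (\<lambda>x. \<Sum>k\<in>{1..Suc m}. 1 * jucys_murphy_op n r k f x)" for f
    unfolding jucys_murphy_sum_op_apply by simp
  have "?X (?L f) = ?L (?X f)" for f
  proof -
    have "?X (?L f) = (\<lambda>x. \<Sum>k\<in>{1..Suc m}. 1 * ?X (jucys_murphy_op n r k f) x)"
      unfolding L by (rule lin_op_sum[OF lin_op_word_ops(3)]) simp
    also have "\<dots> = (\<lambda>x. \<Sum>k\<in>{1..Suc m}. 1 * jucys_murphy_op n r k (?X f) x)"
      using jucys_murphy_ops_commute Suc.prems(1)
      by (intro ext sum.cong refl) (metis atLeastAtMost_iff le_trans)
    finally show ?thesis unfolding L .
  qed
  then obtain w b where w: "supported (inj_words n r) w" "w \<noteq> (\<lambda>_. 0)"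
      "?L w = (\<lambda>x. t * w x)" "?X w = (\<lambda>x. b * w x)"
    using commuting_ops_common_eigenvector[OF finite_inj_words lin_op_word_ops(3,4)
        supported_word_ops(3) _ v0] by blast
  have "b \<in> \<int>"
    using jucys_murphy_eigenvalue_int[of "Suc m" n r b] Suc.prems(1) w unfolding is_eigenvalue_iff by auto
  have "jucys_murphy_sum_op n r m w = (\<lambda>x. (t - b) * w x)"
    using w(3,4) by (auto simp: fun_eq_iff jucys_murphy_sum_op_apply algebra_simps dest: fun_cong)
  then have "t - b \<in> \<int>"
    using Suc.IH Suc.prems(1) w(1,2) unfolding is_eigenvalue_iff by auto
  then show ?case using \<open>b \<in> \<int>\<close> by (metis Ints_add diff_add_cancel)
qed

section \<open>The Laplacian\<close>

lemma sum_square_split_diagonal: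
  fixes H :: "'a::linorder \<Rightarrow> 'a \<Rightarrow> 'b::comm_monoid_add"
  assumes "finite A"
  shows "(\<Sum>a\<in>A. \<Sum>b\<in>A. H a b) = (\<Sum>a\<in>A. H a a) + (\<Sum>a\<in>A. \<Sum>b\<in>{b\<in>A. b < a}. H a b + H b a)"
  using assms
proof (induction rule: finite_linorder_max_induct)
  case (insert c A)
  have below: "{b \<in> insert c A. b < c} = A"
    "\<And>a. a \<in> A \<Longrightarrow> {b \<in> insert c A. b < a} = {b \<in> A. b < a}"
    using insert.hyps by auto
  have "c \<notin> A" using insert.hyps by auto
  then have "(\<Sum>a\<in>insert c A. \<Sum>b\<in>insert c A. H a b) =
      (\<Sum>a\<in>A. \<Sum>b\<in>A. H a b) + H c c + (\<Sum>a\<in>A. H c a + H a c)"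
    using insert.hyps by (simp add: sum.distrib ac_simps)
  also have "\<dots> = (\<Sum>a\<in>insert c A. H a a) +
      (\<Sum>a\<in>insert c A. \<Sum>b\<in>{b\<in>insert c A. b < a}. H a b + H b a)"
    using insert below \<open>c \<notin> A\<close> by (simp add: ac_simps)
  finally show ?case .
qed simp

lemma sum_square_lessThan_split:
  fixes H :: "nat \<Rightarrow> nat \<Rightarrow> 'b::comm_monoid_add"
  shows "(\<Sum>k<m. \<Sum>l<m. H k l) = (\<Sum>k<m. H k k) + (\<Sum>k<m. \<Sum>l<k. H k l + H l k)"
proof -
  have "{l \<in> {..<m}. l < k} = {..<k}" if "k < m" for k
    using that by auto
  then show ?thesis by (simp add: sum_square_split_diagonal)
qed

lemma alternating_ins_del_sum:
  fixes F :: "'a list \<Rightarrow> complex"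
  assumes "length x = r"
  shows "(\<Sum>k<Suc r. \<Sum>l<Suc r. (-1) ^ (k + l) * F (del_pos l (ins_pos k a x)))
       + (\<Sum>j<r. \<Sum>i<r. (-1) ^ (j + i) * F (ins_pos i a (del_pos j x)))
       = of_nat (Suc r) * F x - (\<Sum>i<r. F (x[i := a]))"
proof -
  define H where "H k l = (-1) ^ (k + l) * F (del_pos l (ins_pos k a x))" for k l
  define G where "G i j = (-1) ^ (i + j) * F (ins_pos i a (del_pos j x))" for i j
  have even_sign: "(-1::complex) ^ (k + k) = 1" for k
    by (simp flip: mult_2)
  have H_diag: "H k k = F x" if "k < Suc r" for k
    unfolding H_def using that assms even_sign by simp
  have H_off: "H (Suc i) l + H l (Suc i) = - (G i l + G l i)" if "l \<le> i" "i < r" for i l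
    unfolding H_def G_def using del_pos_ins_pos_Suc[of l i x a] del_pos_Suc_ins_pos[of l i x a] that assms
    by (simp add: algebra_simps)
  have G_diag: "G i i = F (x[i := a])" if "i < r" for i
    unfolding G_def using that assms even_sign ins_pos_del_pos[of i x a] by simp
  define P where "P = (\<Sum>i<r. \<Sum>l<i. G i l + G l i)"
  have "(\<Sum>k<Suc r. \<Sum>l<Suc r. H k l) = (\<Sum>k<Suc r. H k k) + (\<Sum>k<Suc r. \<Sum>l<k. H k l + H l k)"
    by (rule sum_square_lessThan_split)
  also have "(\<Sum>k<Suc r. H k k) = of_nat (Suc r) * F x"
    using H_diag by simp
  also have "(\<Sum>k<Suc r. \<Sum>l<k. H k l + H l k) = (\<Sum>i<r. \<Sum>l<Suc i. H (Suc i) l + H l (Suc i))"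
    by (simp only: sum.lessThan_Suc_shift) simp
  also have "(\<Sum>i<r. \<Sum>l<Suc i. H (Suc i) l + H l (Suc i)) = - P - 2 * (\<Sum>i<r. G i i)"
    using H_off by (simp add: P_def sum_negf sum.distrib sum_subtractf sum_distrib_left)
  finally have "(\<Sum>k<Suc r. \<Sum>l<Suc r. H k l) = of_nat (Suc r) * F x - P - 2 * (\<Sum>i<r. G i i)"
    by simp
  moreover have "(\<Sum>j<r. \<Sum>i<r. G i j) = (\<Sum>i<r. G i i) + P"
    unfolding P_def using sum_square_lessThan_split[of "\<lambda>j i. G i j" r] by (simp add: add.commute)
  ultimately show ?thesis
    using G_diag unfolding H_def G_def by (simp add: add.commute)
qed

lemma if_zero_mult: "(if P then a else 0) * b = (if P then a * b else (0::'a::mult_zero))"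
  by simp

lemma cobd_apply:
  assumes "y \<in> inj_words n (Suc r)"
  shows "cobd n r g y = (\<Sum>l<Suc r. (-1) ^ l * g (del_pos l y))"
proof -
  have "cnj (bd_coeff y u) = bd_coeff y u" for u
    unfolding bd_coeff_def by (simp add: if_distrib cong: if_cong)
  then have "cobd n r g y =
      (\<Sum>u\<in>inj_words n r. \<Sum>l<length y. if del_pos l y = u then (-1) ^ l * g u else 0)"
    using assms unfolding cobd_def by (simp only: if_True bd_coeff_def sum_distrib_right if_zero_mult)
  also have "\<dots> = (\<Sum>l<length y. \<Sum>u\<in>inj_words n r. if del_pos l y = u then (-1) ^ l * g u else 0)"
    by (rule sum.swap)
  also have "\<dots> = (\<Sum>l<Suc r. (-1) ^ l * g (del_pos l y))"
    using assms del_pos_in_inj_words[OF assms] finite_inj_words unfolding inj_words_def by simp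
  finally show ?thesis .
qed

lemma sum_del_pos_preimage:
  assumes u: "u \<in> inj_words n m" and "i \<le> m"
  shows "(\<Sum>w\<in>inj_words n (Suc m). if del_pos i w = u then h w else 0) =
    (\<Sum>a\<in>{1..n} - set u. h (ins_pos i a u))"
proof -
  have len: "length u = m" using u unfolding inj_words_def by simp
  have "(\<Sum>w\<in>inj_words n (Suc m). if del_pos i w = u then h w else 0) =
      (\<Sum>w\<in>{w\<in>inj_words n (Suc m). del_pos i w = u}. h w)"
    by (rule sum.inter_filter[symmetric]) (rule finite_inj_words)
  also have "\<dots> = (\<Sum>a\<in>{1..n} - set u. h (ins_pos i a u))"
  proof (rule sum.reindex_bij_betw[symmetric], rule bij_betw_byWitness[where f' = "\<lambda>w. w ! i"])
    show "\<forall>a\<in>{1..n} - set u. ins_pos i a u ! i = a" using len assms(2) by simp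
    show "\<forall>w\<in>{w \<in> inj_words n (Suc m). del_pos i w = u}. ins_pos i (w ! i) u = w"
    proof
      fix w assume w: "w \<in> {w \<in> inj_words n (Suc m). del_pos i w = u}"
      then have "i < length w" using assms(2) unfolding inj_words_def by simp
      then show "ins_pos i (w ! i) u = w" using ins_pos_nth_del_pos[of i w] w by simp
    qed
    show "(\<lambda>a. ins_pos i a u) ` ({1..n} - set u) \<subseteq> {w \<in> inj_words n (Suc m). del_pos i w = u}"
      using ins_pos_in_inj_words[OF u _ assms(2)] len assms(2) by auto
    show "(\<lambda>w. w ! i) ` {w \<in> inj_words n (Suc m). del_pos i w = u} \<subseteq> {1..n} - set u"
    proof clarify
      fix w assume w: "w \<in> inj_words n (Suc m)" "u = del_pos i w"
      then have "i < length w" "distinct w" "set w \<subseteq> {1..n}"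
        using assms(2) unfolding inj_words_def by auto
      then show "w ! i \<in> {1..n} - set (del_pos i w)"
        using set_del_pos[of w i] nth_mem[of i w] by blast
    qed
  qed
  finally show ?thesis .
qed

lemma bd_apply:
  assumes u: "u \<in> inj_words n m"
  shows "bd n (Suc m) h u = (\<Sum>i<Suc m. (-1) ^ i * (\<Sum>a\<in>{1..n} - set u. h (ins_pos i a u)))"
proof -
  have "bd n (Suc m) h u = (\<Sum>w\<in>inj_words n (Suc m). bd_coeff w u * h w)"
    using u unfolding bd_def by simp
  also have "\<dots> = (\<Sum>w\<in>inj_words n (Suc m). \<Sum>i<Suc m. if del_pos i w = u then (-1) ^ i * h w else 0)"
  proof (rule sum.cong[OF refl])
    fix w assume "w \<in> inj_words n (Suc m)"
    then have "length w = Suc m" unfolding inj_words_def by simp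
    then show "bd_coeff w u * h w = (\<Sum>i<Suc m. if del_pos i w = u then (-1) ^ i * h w else 0)"
      unfolding bd_coeff_def by (simp only: sum_distrib_right if_zero_mult mult.assoc)
  qed
  also have "\<dots> = (\<Sum>i<Suc m. \<Sum>w\<in>inj_words n (Suc m). if del_pos i w = u then (-1) ^ i * h w else 0)"
    by (rule sum.swap)
  also have "\<dots> = (\<Sum>i<Suc m. (-1) ^ i * (\<Sum>a\<in>{1..n} - set u. h (ins_pos i a u)))"
  proof (rule sum.cong[OF refl])
    fix i assume "i \<in> {..<Suc m}"
    then show "(\<Sum>w\<in>inj_words n (Suc m). if del_pos i w = u then (-1) ^ i * h w else 0) =
        (-1) ^ i * (\<Sum>a\<in>{1..n} - set u. h (ins_pos i a u))"
      using sum_del_pos_preimage[OF u, of i "\<lambda>w. (-1) ^ i * h w"] by (simp add: sum_distrib_left)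
  qed
  finally show ?thesis .
qed

lemma bd_cobd_apply:
  assumes x: "x \<in> inj_words n r"
  shows "bd n (Suc r) (cobd n r f) x =
    (\<Sum>a\<in>{1..n} - set x. \<Sum>k<Suc r. \<Sum>l<Suc r. (-1) ^ (k + l) * f (del_pos l (ins_pos k a x)))"
proof -
  have "bd n (Suc r) (cobd n r f) x =
      (\<Sum>k<Suc r. (-1) ^ k * (\<Sum>a\<in>{1..n} - set x. cobd n r f (ins_pos k a x)))"
    by (rule bd_apply[OF x])
  also have "\<dots> = (\<Sum>k<Suc r. \<Sum>a\<in>{1..n} - set x. \<Sum>l<Suc r.
      (-1) ^ (k + l) * f (del_pos l (ins_pos k a x)))"
    using cobd_apply[OF ins_pos_in_inj_words[OF x]]
    by (simp add: sum_distrib_left power_add mult.assoc del: sum.lessThan_Suc)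
  also have "\<dots> = (\<Sum>a\<in>{1..n} - set x. \<Sum>k<Suc r. \<Sum>l<Suc r.
      (-1) ^ (k + l) * f (del_pos l (ins_pos k a x)))"
    by (rule sum.swap)
  finally show ?thesis .
qed

lemma cobd_bd_apply:
  assumes x: "x \<in> inj_words n (Suc r)"
  shows "cobd n r (bd n (Suc r) f) x =
    (\<Sum>j<Suc r. \<Sum>i<Suc r. (-1) ^ (j + i) * f (move_letter j i x))
    + (\<Sum>a\<in>{1..n} - set x. \<Sum>j<Suc r. \<Sum>i<Suc r. (-1) ^ (j + i) * f (ins_pos i a (del_pos j x)))"
proof -
  let ?A = "{1..n} - set x"
  have x_props: "length x = Suc r" "distinct x" "set x \<subseteq> {1..n}"
    using x unfolding inj_words_def by auto
  have "bd n (Suc r) f (del_pos j x) =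
      (\<Sum>i<Suc r. (-1) ^ i * (f (move_letter j i x) + (\<Sum>a\<in>?A. f (ins_pos i a (del_pos j x)))))"
    if j: "j < Suc r" for j
  proof -
    have "{1..n} - set (del_pos j x) = insert (x ! j) ?A" "x ! j \<notin> ?A"
      using set_del_pos[of x j] x_props j nth_mem[of j x] by auto
    then show ?thesis
      using bd_apply[OF del_pos_in_inj_words[OF x, of j]] j by (simp add: move_letter_eq)
  qed
  then have "cobd n r (bd n (Suc r) f) x =
      (\<Sum>j<Suc r. (-1) ^ j * (\<Sum>i<Suc r. (-1) ^ i *
        (f (move_letter j i x) + (\<Sum>a\<in>?A. f (ins_pos i a (del_pos j x))))))"
    using cobd_apply[OF x] by (simp del: sum.lessThan_Suc)
  also have "\<dots> = (\<Sum>j<Suc r. \<Sum>i<Suc r. (-1) ^ (j + i) * f (move_letter j i x))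
      + (\<Sum>j<Suc r. \<Sum>i<Suc r. \<Sum>a\<in>?A. (-1) ^ (j + i) * f (ins_pos i a (del_pos j x)))"
    by (simp add: sum_distrib_left sum.distrib power_add algebra_simps del: sum.lessThan_Suc)
  also have "(\<Sum>j<Suc r. \<Sum>i<Suc r. \<Sum>a\<in>?A. (-1) ^ (j + i) * f (ins_pos i a (del_pos j x)))
      = (\<Sum>a\<in>?A. \<Sum>j<Suc r. \<Sum>i<Suc r. (-1) ^ (j + i) * f (ins_pos i a (del_pos j x)))"
    by (simp only: sum.swap[of _ ?A])
  finally show ?thesis .
qed

lemma signed_shuffle_op_apply:
  "x \<in> inj_words n r \<Longrightarrow>
    signed_shuffle_op n r f x = (\<Sum>j<r. \<Sum>i<r. (-1) ^ (j + i) * f (move_letter j i x))"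
  unfolding signed_shuffle_op_def pullback_op_def by (simp add: sum.cartesian_product')

lemma laplacian_apply:
  assumes x: "x \<in> inj_words n r"
  shows "laplacian n r f x = signed_shuffle_op n r f x + of_nat ((n - r) * Suc r) * f x
    - (\<Sum>a\<in>{1..n} - set x. \<Sum>j<r. f (x[j := a]))"
proof -
  let ?A = "{1..n} - set x"
  have "length x = r" "distinct x" "set x \<subseteq> {1..n}"
    using x unfolding inj_words_def by auto
  then have card_A: "card ?A = n - r"
    by (simp add: card_Diff_subset distinct_card)
  have "(if r = 0 then 0 else cobd n (r - 1) (bd n r f) x) =
      signed_shuffle_op n r f x
      + (\<Sum>a\<in>?A. \<Sum>j<r. \<Sum>i<r. (-1) ^ (j + i) * f (ins_pos i a (del_pos j x)))"
    using x cobd_bd_apply[of x n "r - 1" f] by (cases r) (simp_all add: signed_shuffle_op_apply)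
  then have "laplacian n r f x = signed_shuffle_op n r f x
      + (\<Sum>a\<in>?A. \<Sum>j<r. \<Sum>i<r. (-1) ^ (j + i) * f (ins_pos i a (del_pos j x)))
      + (\<Sum>a\<in>?A. \<Sum>k<Suc r. \<Sum>l<Suc r. (-1) ^ (k + l) * f (del_pos l (ins_pos k a x)))"
    unfolding laplacian_def bd_cobd_apply[OF x] by simp
  also have "\<dots> = signed_shuffle_op n r f x + (\<Sum>a\<in>?A. of_nat (Suc r) * f x - (\<Sum>j<r. f (x[j := a])))"
    using alternating_ins_del_sum[OF \<open>length x = r\<close>, of f]
    by (simp add: add.assoc sum.distrib[symmetric] add.commute)
  also have "\<dots> = signed_shuffle_op n r f x + of_nat ((n - r) * Suc r) * f x
      - (\<Sum>a\<in>?A. \<Sum>j<r. f (x[j := a]))"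
    by (simp only: sum_subtractf sum_constant card_A of_nat_mult mult.assoc add_diff_eq)
  finally show ?thesis .
qed

lemma pos_transp_op_apply:
  "x \<in> inj_words n r \<Longrightarrow> pos_transp_op n r f x = (\<Sum>i<r. \<Sum>j<r. f (swap_pos i j x))"
  unfolding pos_transp_op_def pullback_op_def by (simp add: sum.cartesian_product')

lemma sum_letter_transpositions:
  assumes "x \<in> inj_words n r"
  shows "(\<Sum>a\<in>{1..n}. \<Sum>b\<in>{1..n}. f (map (transpose a b) x)) =
    2 * jucys_murphy_sum_op n r n f x + of_nat n * f x"
proof -
  have "{b \<in> {1..n}. b < a} = {1..<a}" if "a \<in> {1..n}" for a
    using that by auto
  then have "(\<Sum>a\<in>{1..n}. \<Sum>b\<in>{1..n}. f (map (transpose a b) x)) =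
      of_nat n * f x + (\<Sum>a\<in>{1..n}. \<Sum>b\<in>{1..<a}. 2 * f (map (transpose b a) x))"
    by (simp add: sum_square_split_diagonal transpose_commute[of _ a for a])
  then show ?thesis
    using assms by (simp add: jucys_murphy_sum_op_apply jucys_murphy_op_apply sum_distrib_left)
qed

lemma sum_letter_transpositions_split:
  assumes x: "x \<in> inj_words n r"
  shows "(\<Sum>a\<in>{1..n}. \<Sum>b\<in>{1..n}. f (map (transpose a b) x)) =
    pos_transp_op n r f x + 2 * (\<Sum>a\<in>{1..n} - set x. \<Sum>j<r. f (x[j := a]))
    + of_nat ((n - r) * (n - r)) * f x"
proof -
  let ?A = "{1..n} - set x" and ?S = "set x"
  let ?g = "\<lambda>a b. f (map (transpose a b) x)"
  have x_props: "length x = r" "distinct x" "set x \<subseteq> {1..n}"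
    using x unfolding inj_words_def by auto
  have card_A: "card ?A = n - r"
    using x_props by (simp add: card_Diff_subset distinct_card)
  have split: "(\<Sum>a\<in>{1..n}. h a) = (\<Sum>a\<in>?S. h a) + (\<Sum>a\<in>?A. h a)" for h :: "nat \<Rightarrow> complex"
    using sum.subset_diff[OF x_props(3), of h] by (simp add: add.commute)
  have SS: "(\<Sum>a\<in>?S. \<Sum>b\<in>?S. ?g a b) = pos_transp_op n r f x"
    using map_transpose_nth_nth[OF x_props(2)] x_props(1)
    by (simp add: sum.reindex_bij_betw[OF bij_betw_nth[OF x_props(2) refl refl], symmetric]
        pos_transp_op_apply[OF x])
  have SA: "(\<Sum>a\<in>?S. \<Sum>b\<in>?A. ?g a b) = (\<Sum>a\<in>?A. \<Sum>j<r. f (x[j := a]))"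
    using map_transpose_nth_notin[OF x_props(2)] x_props(1)
    by (simp add: sum.reindex_bij_betw[OF bij_betw_nth[OF x_props(2) refl refl], symmetric])
      (rule sum.swap)
  have AS: "(\<Sum>a\<in>?A. \<Sum>b\<in>?S. ?g a b) = (\<Sum>a\<in>?S. \<Sum>b\<in>?A. ?g a b)"
    by (subst sum.swap) (simp add: transpose_commute)
  have AA: "(\<Sum>a\<in>?A. \<Sum>b\<in>?A. ?g a b) = of_nat ((n - r) * (n - r)) * f x"
    using card_A map_transpose_notin[of _ x] by simp
  show ?thesis
    unfolding split sum.distrib SS AS SA AA by simp
qed

definition position_op :: "nat \<Rightarrow> nat \<Rightarrow> (nat list \<Rightarrow> complex) \<Rightarrow> nat list \<Rightarrow> complex" where
  "position_op n r f = (\<lambda>x. signed_shuffle_op n r f x + 1 / 2 * pos_transp_op n r f x)"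

definition lap_const :: "nat \<Rightarrow> nat \<Rightarrow> complex" where
  "lap_const n r = of_nat ((n - r) * Suc r) + (of_nat ((n - r) * (n - r)) - of_nat n) / 2"

lemma laplacian_outside: "x \<notin> inj_words n r \<Longrightarrow> laplacian n r f x = 0"
  unfolding laplacian_def cobd_def bd_def by auto

lemma laplacian_eq:
  assumes f: "supported (inj_words n r) f"
  shows "laplacian n r f =
    (\<lambda>x. position_op n r f x - jucys_murphy_sum_op n r n f x + lap_const n r * f x)"
proof
  fix x
  show "laplacian n r f x = position_op n r f x - jucys_murphy_sum_op n r n f x + lap_const n r * f x"
  proof (cases "x \<in> inj_words n r")
    case True
    define R where "R = (\<Sum>a\<in>{1..n} - set x. \<Sum>j<r. f (x[j := a]))"
    have "2 * jucys_murphy_sum_op n r n f x + of_nat n * f x =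
        pos_transp_op n r f x + 2 * R + of_nat ((n - r) * (n - r)) * f x"
      using sum_letter_transpositions[OF True, of f] sum_letter_transpositions_split[OF True, of f]
      unfolding R_def by simp
    then have R_eq: "R = jucys_murphy_sum_op n r n f x
        + (of_nat n * f x - pos_transp_op n r f x - of_nat ((n - r) * (n - r)) * f x) / 2"
      by algebra
    show ?thesis
      unfolding laplacian_apply[OF True] R_def[symmetric] R_eq position_op_def lap_const_def
      by (simp add: field_simps)
  next
    case False
    then show ?thesis
      using f laplacian_outside[OF False] supported_word_ops(1,2,4)
      unfolding supported_def position_op_def by simp
  qed
qed

lemma lin_op_laplacian: "lin_op (laplacian n r)"
proof -
  have bd: "\<And>n r. lin_op (bd n r)" and cobd: "\<And>n r. lin_op (cobd n r)"
    unfolding lin_op_def bd_def cobd_def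
    by (auto simp: fun_eq_iff sum.distrib sum_distrib_left algebra_simps)
  show ?thesis
    unfolding lin_op_def laplacian_def
    by (cases r) (simp_all add: lin_op_add[OF bd] lin_op_scale[OF bd] lin_op_add[OF cobd] lin_op_scale[OF cobd]
        algebra_simps)
qed

lemma jucys_murphy_sum_op_commute_signed_shuffle:
  "m \<le> n \<Longrightarrow>
    jucys_murphy_sum_op n r m (signed_shuffle_op n r f) = signed_shuffle_op n r (jucys_murphy_sum_op n r m f)"
  unfolding jucys_murphy_sum_op_def signed_shuffle_op_def
  by (rule pullback_op_commute)
    (auto intro: map_transpose_in_inj_words move_letter_in_inj_words
      simp: map_move_letter dest: length_inj_words)

lemma jucys_murphy_sum_op_commute_pos_transp:
  "m \<le> n \<Longrightarrow>
    jucys_murphy_sum_op n r m (pos_transp_op n r f) = pos_transp_op n r (jucys_murphy_sum_op n r m f)"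
  unfolding jucys_murphy_sum_op_def pos_transp_op_def
  by (rule pullback_op_commute)
    (auto intro: map_transpose_in_inj_words swap_pos_in_inj_words
      simp: map_swap_pos dest: length_inj_words)

lemma lin_op_position_op: "lin_op (position_op n r)"
  unfolding lin_op_def position_op_def
  by (simp add: lin_op_add[OF lin_op_word_ops(1)] lin_op_scale[OF lin_op_word_ops(1)]
      lin_op_add[OF lin_op_word_ops(2)] lin_op_scale[OF lin_op_word_ops(2)] algebra_simps)

lemma supported_position_op: "supported (inj_words n r) (position_op n r f)"
  using supported_word_ops(1,2) unfolding supported_def position_op_def by simp

lemma jucys_murphy_sum_op_commute_position_op:
  assumes "m \<le> n"
  shows "jucys_murphy_sum_op n r m (position_op n r f) = position_op n r (jucys_murphy_sum_op n r m f)"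
  unfolding position_op_def
    lin_op_add[OF lin_op_word_ops(4)] lin_op_scale[OF lin_op_word_ops(4)]
    jucys_murphy_sum_op_commute_signed_shuffle[OF assms] jucys_murphy_sum_op_commute_pos_transp[OF assms] ..

lemma jucys_murphy_sum_op_commute_laplacian:
  assumes "supported (inj_words n r) f"
  shows "jucys_murphy_sum_op n r n (laplacian n r f) = laplacian n r (jucys_murphy_sum_op n r n f)"
  unfolding laplacian_eq[OF assms] laplacian_eq[OF supported_word_ops(4)]
    lin_op_add[OF lin_op_word_ops(4)] lin_op_diff[OF lin_op_word_ops(4)] lin_op_scale[OF lin_op_word_ops(4)]
    jucys_murphy_sum_op_commute_position_op[OF order.refl] ..

lemma laplacian_eigenvalue_position_op:
  assumes "is_eigenvalue (inj_words n r) (laplacian n r) c"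
  shows "\<exists>t\<in>\<int>. is_eigenvalue (inj_words n r) (position_op n r) (c + t - lap_const n r)"
proof -
  let ?L = "jucys_murphy_sum_op n r n"
  obtain f where f: "supported (inj_words n r) f" "f \<noteq> (\<lambda>_. 0)" "laplacian n r f = (\<lambda>x. c * f x)"
    using assms unfolding is_eigenvalue_iff by blast
  obtain w t where w: "supported (inj_words n r) w" "w \<noteq> (\<lambda>_. 0)"
      "laplacian n r w = (\<lambda>x. c * w x)" "?L w = (\<lambda>x. t * w x)"
    using commuting_ops_common_eigenvector[OF finite_inj_words lin_op_word_ops(4) lin_op_laplacian
        supported_word_ops(4) jucys_murphy_sum_op_commute_laplacian f] by blast
  have "t \<in> \<int>"
    using jucys_murphy_sum_eigenvalue_int[of n n r t] w(1,2,4) unfolding is_eigenvalue_iff by blast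
  moreover have "position_op n r w = (\<lambda>x. (c + t - lap_const n r) * w x)"
    using w(3,4) unfolding laplacian_eq[OF w(1)] by (auto simp: fun_eq_iff algebra_simps dest: fun_cong)
  ultimately show ?thesis
    using w(1,2) unfolding is_eigenvalue_iff by blast
qed

section \<open>Reduction to the random-to-random element\<close>

lemma pullback_op_relabel:
  assumes "p \<in> W'" "\<phi> p \<in> W"
    and "\<And>i. i \<in> I \<Longrightarrow> h i p \<in> W'"
    and "\<And>i. i \<in> I \<Longrightarrow> \<phi> (h i p) = h i (\<phi> p)"
  shows "pullback_op W' I c h (\<lambda>q. if q \<in> W' then w (\<phi> q) else 0) p = pullback_op W I c h w (\<phi> p)"
  using assms unfolding pullback_op_def by (auto intro!: sum.cong)

lemma map_relabel_in_inj_words: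
  assumes x: "x \<in> inj_words n r" and p: "p \<in> inj_words r r"
  shows "map (\<lambda>i. x ! (i - 1)) p \<in> inj_words n r"
proof -
  have x_props: "length x = r" "distinct x" "set x \<subseteq> {1..n}"
    and p_props: "length p = r" "distinct p" "set p \<subseteq> {1..r}"
    using x p unfolding inj_words_def by auto
  have "inj_on (\<lambda>i. x ! (i - 1)) (set p)"
  proof (rule inj_onI)
    fix a b assume ab: "a \<in> set p" "b \<in> set p" "x ! (a - 1) = x ! (b - 1)"
    then have "a \<in> {1..r}" "b \<in> {1..r}" using p_props(3) by auto
    moreover have "a - 1 < length x" "b - 1 < length x" using calculation x_props(1) by auto
    then have "a - 1 = b - 1" using ab(3) nth_eq_iff_index_eq[OF x_props(2)] by blast
    ultimately show "a = b" by auto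
  qed
  moreover have "x ! (i - 1) \<in> {1..n}" if "i \<in> set p" for i
    using that p_props(3) x_props nth_mem[of "i - 1" x] by (auto simp: subset_iff)
  ultimately show ?thesis
    using p_props unfolding inj_words_def by (auto simp: distinct_map)
qed

text \<open>The position operator does not see the names of the letters: an eigenvector on words
  over {1..n} restricts, along the letters of a word x in its support, to an eigenvector on
  permutations of {1..r}.\<close>

lemma position_op_eigenvalue_relabel:
  assumes "is_eigenvalue (inj_words n r) (position_op n r) \<mu>"
  shows "is_eigenvalue (inj_words r r) (position_op r r) \<mu>"
proof -
  let ?S = "inj_words r r"
  obtain w where w: "supported (inj_words n r) w" "w \<noteq> (\<lambda>_. 0)" "position_op n r w = (\<lambda>x. \<mu> * w x)"
    using assms unfolding is_eigenvalue_iff by blast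
  obtain x where "w x \<noteq> 0" using w(2) by auto
  with w(1) have x: "x \<in> inj_words n r" unfolding supported_def by blast
  define \<phi> where "\<phi> i = x ! (i - 1)" for i
  define g where "g p = (if p \<in> ?S then w (map \<phi> p) else 0)" for p
  have relabel: "position_op r r g p = position_op n r w (map \<phi> p)" if p: "p \<in> ?S" for p
  proof -
    have "length p = r" using p by (rule length_inj_words)
    have "map \<phi> p \<in> inj_words n r" unfolding \<phi>_def by (rule map_relabel_in_inj_words[OF x p])
    then have "signed_shuffle_op r r g p = signed_shuffle_op n r w (map \<phi> p)"
      "pos_transp_op r r g p = pos_transp_op n r w (map \<phi> p)"
      unfolding signed_shuffle_op_def pos_transp_op_def g_def
      by (rule pullback_op_relabel[OF p],
          auto simp: move_letter_in_inj_words[OF p] swap_pos_in_inj_words[OF p] map_move_letter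
            map_swap_pos \<open>length p = r\<close>)+
    then show ?thesis unfolding position_op_def by simp
  qed
  have "[1..<Suc r] \<in> ?S" unfolding inj_words_def by auto
  moreover have "map \<phi> [1..<Suc r] = x"
    using length_inj_words[OF x] unfolding \<phi>_def by (intro nth_equalityI) (auto simp del: upt_Suc)
  ultimately have "g \<noteq> (\<lambda>_. 0)" using \<open>w x \<noteq> 0\<close> unfolding g_def by (metis (full_types))
  moreover have "position_op r r g = (\<lambda>p. \<mu> * g p)"
    using relabel w(3) supported_position_op[of r r g]
    unfolding supported_def g_def by (auto simp: fun_eq_iff)
  moreover have "supported ?S g" unfolding supported_def g_def by simp
  ultimately show ?thesis unfolding is_eigenvalue_iff by blast
qed

lemma pos_transp_op_permutation:
  assumes p: "p \<in> inj_words r r"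
  shows "pos_transp_op r r f p = 2 * jucys_murphy_sum_op r r r f p + of_nat r * f p"
proof -
  have "distinct p" "length p = r" "set p \<subseteq> {1..r}" using p unfolding inj_words_def by auto
  then have "set p = {1..r}" by (simp add: card_subset_eq distinct_card)
  then show ?thesis
    using sum_letter_transpositions[OF p, of f] sum_letter_transpositions_split[OF p, of f] by simp
qed

lemma position_op_eigenvalue_signed_shuffle:
  assumes "is_eigenvalue (inj_words r r) (position_op r r) \<mu>"
  shows "\<exists>\<tau>\<in>\<int>. is_eigenvalue (inj_words r r) (signed_shuffle_op r r) (\<mu> - \<tau> - of_nat r / 2)"
proof -
  let ?S = "inj_words r r" and ?L = "jucys_murphy_sum_op r r r"
  obtain g where g: "supported ?S g" "g \<noteq> (\<lambda>_. 0)" "position_op r r g = (\<lambda>x. \<mu> * g x)"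
    using assms unfolding is_eigenvalue_iff by blast
  obtain h \<tau> where h: "supported ?S h" "h \<noteq> (\<lambda>_. 0)"
      "position_op r r h = (\<lambda>x. \<mu> * h x)" "?L h = (\<lambda>x. \<tau> * h x)"
    using commuting_ops_common_eigenvector[OF finite_inj_words lin_op_word_ops(4) lin_op_position_op
        supported_word_ops(4) jucys_murphy_sum_op_commute_position_op[OF order.refl] g]
    by blast
  have "\<tau> \<in> \<int>"
    using jucys_murphy_sum_eigenvalue_int[of r r r \<tau>] h(1,2,4) unfolding is_eigenvalue_iff by blast
  moreover have "signed_shuffle_op r r h p = (\<mu> - \<tau> - of_nat r / 2) * h p" for p
  proof (cases "p \<in> ?S")
    case True
    then show ?thesis
      using fun_cong[OF h(3), of p] fun_cong[OF h(4), of p] pos_transp_op_permutation[OF True, of h]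
      unfolding position_op_def by (simp add: field_simps)
  next
    case False
    then show ?thesis using h(1) supported_word_ops(1)[of r r h] unfolding supported_def by simp
  qed
  ultimately show ?thesis using h(1,2) unfolding is_eigenvalue_iff by blast
qed

lemma upsilon_op_apply:
  assumes p: "p \<in> inj_words r r"
  shows "upsilon_op r f p = (\<Sum>u<r. \<Sum>v<r. f (move_letter v u p))"
proof -
  let ?S = "inj_words r r"
  have "upsilon_op r f p = (\<Sum>w\<in>?S. \<Sum>u<r. \<Sum>v<r. if move_letter u v w = p then f w else 0)"
    using p unfolding upsilon_op_def by simp
  also have "\<dots> = (\<Sum>u<r. \<Sum>w\<in>?S. \<Sum>v<r. if move_letter u v w = p then f w else 0)"
    by (rule sum.swap)
  also have "\<dots> = (\<Sum>u<r. \<Sum>v<r. \<Sum>w\<in>?S. if move_letter u v w = p then f w else 0)"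
    by (rule sum.cong[OF refl], rule sum.swap)
  also have "\<dots> = (\<Sum>u<r. \<Sum>v<r. f (move_letter v u p))"
  proof (intro sum.cong refl)
    fix u v assume uv: "u \<in> {..<r}" "v \<in> {..<r}"
    have "move_letter u v w = p \<longleftrightarrow> w = move_letter v u p" if "w \<in> ?S" for w
      using move_letter_inverse[of u w v] move_letter_inverse[of v p u] uv
        length_inj_words[OF that] length_inj_words[OF p] by auto
    then show "(\<Sum>w\<in>?S. if move_letter u v w = p then f w else 0) = f (move_letter v u p)"
      using move_letter_in_inj_words[OF p, of v u] uv finite_inj_words by (simp cong: sum.cong)
  qed
  finally show ?thesis .
qed

text \<open>Twisting by the sign character turns the signed shuffle into \<upsilon>_r, because moving
  a letter from position u to position v is a cycle of sign (-1)^(u+v).\<close>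

lemma signed_shuffle_eigenvalue_upsilon:
  assumes "is_eigenvalue (inj_words r r) (signed_shuffle_op r r) \<alpha>"
  shows "is_eigenvalue (inj_words r r) (upsilon_op r) \<alpha>"
proof -
  let ?S = "inj_words r r"
  obtain h where h: "supported ?S h" "h \<noteq> (\<lambda>_. 0)" "signed_shuffle_op r r h = (\<lambda>x. \<alpha> * h x)"
    using assms unfolding is_eigenvalue_iff by blast
  define g where "g p = word_sign p * h p" for p
  have "upsilon_op r g p = \<alpha> * g p" for p
  proof (cases "p \<in> ?S")
    case True
    have "distinct p" "length p = r" using True unfolding inj_words_def by auto
    then have "upsilon_op r g p =
        word_sign p * (\<Sum>u<r. \<Sum>v<r. (-1) ^ (v + u) * h (move_letter v u p))"
      unfolding upsilon_op_apply[OF True] g_def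
      by (simp add: word_sign_move_letter sum_distrib_left ac_simps)
    also have "(\<Sum>u<r. \<Sum>v<r. (-1) ^ (v + u) * h (move_letter v u p)) =
        (\<Sum>v<r. \<Sum>u<r. (-1) ^ (v + u) * h (move_letter v u p))"
      by (rule sum.swap)
    finally show ?thesis
      using fun_cong[OF h(3), of p] unfolding signed_shuffle_op_apply[OF True] g_def by simp
  qed (use h(1) in \<open>simp add: upsilon_op_def g_def supported_def\<close>)
  moreover have "supported ?S g" using h(1) unfolding supported_def g_def by simp
  moreover have "g \<noteq> (\<lambda>_. 0)" using h(2) word_sign_nonzero unfolding g_def by (auto simp: fun_eq_iff)
  ultimately show ?thesis unfolding is_eigenvalue_iff by blast
qed

lemma lap_const_plus_half_int:
  assumes "r \<le> n"
  shows "lap_const n r + of_nat r / 2 \<in> \<int>"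
proof -
  define m where "m = n - r"
  have "even (m * (m - 1))" by (cases "even m") auto
  then obtain q where q: "m * (m - 1) = 2 * q" by (elim evenE)
  have n: "n = m + r" using assms unfolding m_def by simp
  have "(of_nat (m * m) :: complex) - of_nat m = of_nat (m * (m - 1))"
    by (cases m) (simp_all add: algebra_simps)
  then have "lap_const n r + of_nat r / 2 = of_nat (m * Suc r) + of_nat (m * (m - 1)) / 2"
    unfolding lap_const_def m_def[symmetric] n by (simp add: field_simps)
  also have "\<dots> = of_nat (m * Suc r + q)" unfolding q by simp
  finally show ?thesis by (metis Ints_of_nat)
qed

theorem theorem3p3:
  fixes n r :: nat
  assumes "r < n"
    and "\<forall>c. is_eigenvalue (inj_words r r) (upsilon_op r) c \<longrightarrow> c \<in> \<int>"
  shows "\<forall>c. is_eigenvalue (inj_words n r) (laplacian n r) c \<longrightarrow> c \<in> \<int>"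
proof (intro allI impI)
  fix c
  assume "is_eigenvalue (inj_words n r) (laplacian n r) c"
  then obtain t where t: "t \<in> \<int>" "is_eigenvalue (inj_words n r) (position_op n r) (c + t - lap_const n r)"
    using laplacian_eigenvalue_position_op by blast
  obtain \<tau> where \<tau>: "\<tau> \<in> \<int>"
    "is_eigenvalue (inj_words r r) (signed_shuffle_op r r) (c + t - lap_const n r - \<tau> - of_nat r / 2)"
    using position_op_eigenvalue_signed_shuffle[OF position_op_eigenvalue_relabel[OF t(2)]] by blast
  have "c + t - lap_const n r - \<tau> - of_nat r / 2 \<in> \<int>"
    using assms(2) signed_shuffle_eigenvalue_upsilon[OF \<tau>(2)] by blast
  moreover have "lap_const n r + of_nat r / 2 \<in> \<int>"
    using lap_const_plus_half_int assms(1) by simp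
  ultimately have "(c + t - lap_const n r - \<tau> - of_nat r / 2) + (lap_const n r + of_nat r / 2) + \<tau> - t \<in> \<int>"
    using t(1) \<tau>(1) by (metis Ints_add Ints_diff)
  then show "c \<in> \<int>" by simp
qed

end
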